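(* Let $G$ be a word-representable graph. Then $l(G \,\square\, K_2) \le 2\,l(G) + 3|G| - 2$.
   Context: All graphs are simple and undirected; $|G|$ denotes the number of vertices of $G$ and $K_n$ is the complete graph on $n$ vertices. Letters $x,y$ alternate in a word $w$ if deleting all other letters from $w$ yields $xyxy\ldots$ or $yxyx\ldots$ (of either parity). A word $w$ over $V(G)$ represents $G$ if every vertex occurs in $w$ and for all distinct $x,y$, $xy\in E(G)$ iff $x,y$ alternate in $w$; $G$ is word-representable if such a word exists, and $l(G)$ is the minimum length of a word representing $G$. The Cartesian product $G\,\square\,H$ has vertex set $V(G)\times V(H)$, with $(u,v)$ adjacent to $(u',v')$ iff either $u=u'$ and $vv'\in E(H)$, or $v=v'$ and $uu'\in E(G)$. *)

theory Defs
  imports Main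
begin

definition simple_graph :: "'a set \<Rightarrow> ('a \<Rightarrow> 'a \<Rightarrow> bool) \<Rightarrow> bool" where
  "simple_graph V E \<longleftrightarrow> finite V \<and> (\<forall>x y. E x y \<longrightarrow> E y x) \<and> (\<forall>x. \<not> E x x)
     \<and> (\<forall>x y. E x y \<longrightarrow> x \<in> V \<and> y \<in> V)"

definition alternate :: "'a list \<Rightarrow> 'a \<Rightarrow> 'a \<Rightarrow> bool" where
  "alternate w x y \<longleftrightarrow>
     (let u = filter (\<lambda>z. z = x \<or> z = y) w in
        \<forall>i. Suc i < length u \<longrightarrow> u ! i \<noteq> u ! Suc i)"

definition represents :: "'a set \<Rightarrow> ('a \<Rightarrow> 'a \<Rightarrow> bool) \<Rightarrow> 'a list \<Rightarrow> bool" where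
  "represents V E w \<longleftrightarrow> set w = V \<and>
     (\<forall>x\<in>V. \<forall>y\<in>V. x \<noteq> y \<longrightarrow> (E x y \<longleftrightarrow> alternate w x y))"

definition word_representable :: "'a set \<Rightarrow> ('a \<Rightarrow> 'a \<Rightarrow> bool) \<Rightarrow> bool" where
  "word_representable V E \<longleftrightarrow> (\<exists>w. represents V E w)"

definition min_rep_len :: "'a set \<Rightarrow> ('a \<Rightarrow> 'a \<Rightarrow> bool) \<Rightarrow> nat" where
  "min_rep_len V E = (LEAST n. \<exists>w. represents V E w \<and> length w = n)"

definition cart_prod_V :: "'a set \<Rightarrow> 'b set \<Rightarrow> ('a \<times> 'b) set" where
  "cart_prod_V V U = V \<times> U"

definition cart_prod_E :: "('a \<Rightarrow> 'a \<Rightarrow> bool) \<Rightarrow> ('b \<Rightarrow> 'b \<Rightarrow> bool)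
    \<Rightarrow> ('a \<times> 'b) \<Rightarrow> ('a \<times> 'b) \<Rightarrow> bool" where
  "cart_prod_E E F p q \<longleftrightarrow>
     (fst p = fst q \<and> F (snd p) (snd q)) \<or> (snd p = snd q \<and> E (fst p) (fst q))"

definition K2_V :: "bool set" where "K2_V = UNIV"
definition K2_E :: "bool \<Rightarrow> bool \<Rightarrow> bool" where "K2_E a b \<longleftrightarrow> a \<noteq> b"

end

theory Submission
  imports Defs
begin

text \<open>Let \<open>w\<close> represent \<open>G\<close> and replace every letter \<open>x\<close> of \<open>w\<close> by \<open>(x,0)(x,1)\<close>
  (with \<open>0, 1\<close> encoded as \<open>False, True\<close>). For \<open>u \<noteq> v\<close> the restriction of this word to
  \<open>(u,c), (v,d)\<close> is the restriction of \<open>w\<close> to \<open>u, v\<close> with the letters renamed, and \<open>(x,0), (x,1)\<close>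
  alternate. Now append the letters \<open>(x,0)\<close> for all vertices \<open>x\<close>, ordered by last occurrence in
  \<open>w\<close>, and then \<open>(x,1)(x,0)\<close> for every vertex except the last letter of \<open>w\<close>. If the last
  occurrence of \<open>u\<close> precedes that of \<open>v\<close>, the restriction to \<open>(u,c), (v,d)\<close> ends in a \<open>v\<close>-letter
  and the suffix contributes \<open>[(u,0)] [(v,0)] (u,c) [(v,d)]\<close>, each bracket present only for
  \<open>c = 0\<close>, \<open>d = 0\<close>, \<open>v \<noteq> last w\<close> respectively: for \<open>c = d\<close> this continues the alternation,
  for \<open>c \<noteq> d\<close> it repeats a letter. The length is \<open>2 l(G) + |G| + 2 (|G| - 1)\<close>.\<close>

lemma alternate_iff_successively:
  "alternate w x y \<longleftrightarrow> successively (\<noteq>) (filter (\<lambda>z. z = x \<or> z = y) w)"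
  unfolding alternate_def Let_def successively_conv_nth by simp

lemma alternate_commute: "alternate w x y \<longleftrightarrow> alternate w y x"
  unfolding alternate_def by (simp add: disj_commute)

lemma butlast_eq_filter_neq_last:
  assumes "distinct xs"
  shows "butlast xs = filter (\<lambda>z. z \<noteq> last xs) xs"
proof (cases xs rule: rev_cases)
  case (snoc ys y)
  then have "filter (\<lambda>z. z \<noteq> y) ys = ys" using assms by (auto simp: filter_id_conv)
  then show ?thesis using snoc by simp
qed simp

lemma last_remdups: "last (remdups xs) = last xs"
  using remdups_filter_last[of "\<lambda>_. True" xs] by simp

lemma filter_butlast_remdups:
  "filter P (butlast (remdups xs)) = filter (\<lambda>z. z \<noteq> last xs) (filter P (remdups xs))"
  by (simp add: butlast_eq_filter_neq_last last_remdups filter_filter conj_commute)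

lemma last_filter_eq_last: "xs \<noteq> [] \<Longrightarrow> P (last xs) \<Longrightarrow> last (filter P xs) = last xs"
  by (induction xs rule: rev_induct) auto

lemma distinct_set_doubleton:
  assumes "distinct xs" "set xs = {x, y}" "x \<noteq> y"
  shows "xs = [x, y] \<or> xs = [y, x]"
proof -
  have "length xs = 2" using distinct_card[OF assms(1)] assms(2,3) by simp
  then obtain a b where "xs = [a, b]"
    by (metis length_0_conv length_Suc_conv numeral_2_eq_2)
  then show ?thesis using assms by auto
qed

lemma successively_concat_replicate_snoc:
  "p \<noteq> q \<Longrightarrow> successively (\<noteq>) (concat (replicate n [p, q]) @ [p])"
  by (induction n) (auto simp: successively_Cons hd_append gr0_conv_Suc)

definition double_word :: "bool \<Rightarrow> 'a list \<Rightarrow> ('a \<times> bool) list" where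
  "double_word a w = concat (map (\<lambda>x. [(x, a), (x, \<not> a)]) w)"

lemma length_double_word: "length (double_word a w) = 2 * length w"
  by (induction w) (simp_all add: double_word_def)

lemma set_double_word: "set (double_word a w) = set w \<times> UNIV"
  by (auto simp: double_word_def)

lemma filter_double_word_distinct:
  "u \<noteq> v \<Longrightarrow> filter (\<lambda>z. z = (u, c) \<or> z = (v, d)) (double_word a w)
     = map (\<lambda>z. if z = u then (u, c) else (v, d)) (filter (\<lambda>z. z = u \<or> z = v) w)"
  by (induction w) (auto simp: double_word_def)

lemma filter_double_word_same:
  "filter (\<lambda>z. z = (x, a) \<or> z = (x, \<not> a)) (double_word a w)
     = concat (replicate (length (filter (\<lambda>z. z = x) w)) [(x, a), (x, \<not> a)])"
  by (induction w) (auto simp: double_word_def)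

text \<open>\<^const>\<open>remdups\<close> keeps the last occurrence of each letter.\<close>
definition prod_K2_word :: "'a list \<Rightarrow> ('a \<times> bool) list" where
  "prod_K2_word w = double_word False w @ map (\<lambda>x. (x, False)) (remdups w)
     @ double_word True (butlast (remdups w))"

lemma set_prod_K2_word: "set (prod_K2_word w) = set w \<times> UNIV"
  by (auto simp: prod_K2_word_def set_double_word dest: in_set_butlastD)

lemma length_prod_K2_word:
  "length (prod_K2_word w) = 2 * length w + 3 * card (set w) - 2"
proof (cases "w = []")
  case False
  then have "card (set w) > 0" by (simp add: card_gt_0_iff)
  then show ?thesis
    by (simp add: prod_K2_word_def length_double_word length_remdups_card_conv)
qed (simp add: prod_K2_word_def double_word_def)

lemma alternate_prod_K2_word_same:
  assumes "x \<in> set w"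
  shows "alternate (prod_K2_word w) (x, False) (x, True)"
proof -
  let ?Q = "\<lambda>z. z = (x, False) \<or> z = (x, True)"
  let ?k = "length (filter (\<lambda>z. z = x) w)"
  have remdups_x: "filter (\<lambda>z. z = x) (remdups w) = [x]"
    using assms by (induction w) (auto simp: filter_empty_conv)
  have "filter (\<lambda>z. z = x) (butlast (remdups w)) = filter (\<lambda>z. z \<noteq> last w) [x]"
    by (simp only: filter_butlast_remdups remdups_x)
  then have "filter ?Q (double_word True (butlast (remdups w)))
      = (if x = last w then [] else [(x, True), (x, False)])"
    using filter_double_word_same[of x True "butlast (remdups w)"]
    by (auto simp: disj_commute)
  moreover have "filter ?Q (map (\<lambda>x. (x, False)) (remdups w)) = [(x, False)]"
    using remdups_x by (simp add: filter_map o_def)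
  ultimately have "filter ?Q (prod_K2_word w)
      = concat (replicate (if x = last w then ?k else Suc ?k) [(x, False), (x, True)]) @ [(x, False)]"
    using filter_double_word_same[of x False w]
    by (simp add: prod_K2_word_def replicate_append_same[symmetric])
  then show ?thesis
    by (simp add: alternate_iff_successively successively_concat_replicate_snoc)
qed

lemma alternate_prod_K2_word_distinct:
  assumes "u \<noteq> v" and order: "filter (\<lambda>z. z = u \<or> z = v) (remdups w) = [u, v]"
  shows "alternate (prod_K2_word w) (u, c) (v, d) \<longleftrightarrow> c = d \<and> alternate w u v"
proof -
  let ?P = "\<lambda>z. z = u \<or> z = v"
  let ?Q = "\<lambda>z. z = (u, c) \<or> z = (v, d)"
  define h where "h z = (if z = u then (u, c) else (v, d))" for z
  define fw where "fw = filter ?P w"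
  define hw where "hw = map h fw"
  have "fw \<noteq> []"
    using order by (metis fw_def remdups_filter remdups_eq_nil_iff list.distinct(1))
  have last_fw: "last fw = v"
    using remdups_filter_last[of ?P w] order by (simp add: fw_def)
  have "last w \<noteq> u"
  proof
    assume "last w = u"
    moreover have "w \<noteq> []" using \<open>fw \<noteq> []\<close> by (auto simp: fw_def)
    ultimately have "last fw = u" using last_filter_eq_last[of w ?P] by (simp add: fw_def)
    with last_fw \<open>u \<noteq> v\<close> show False by simp
  qed
  have tail: "filter ?P (butlast (remdups w)) = u # (if v = last w then [] else [v])"
    using \<open>last w \<noteq> u\<close> by (simp add: filter_butlast_remdups order)
  have "filter (\<lambda>x. ?Q (x, False)) (remdups w) = filter (\<lambda>x. ?Q (x, False)) (filter ?P (remdups w))"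
    by (auto simp: filter_filter intro: filter_cong)
  then have middle: "filter ?Q (map (\<lambda>x. (x, False)) (remdups w)) = filter ?Q [(u, False), (v, False)]"
    by (simp add: filter_map o_def order)
  have restriction: "filter ?Q (prod_K2_word w)
      = hw @ filter ?Q [(u, False), (v, False)] @ map h (u # (if v = last w then [] else [v]))"
    using filter_double_word_distinct[OF \<open>u \<noteq> v\<close>, of c d] tail
    by (simp only: prod_K2_word_def filter_append middle hw_def fw_def h_def[abs_def])
  have "hw \<noteq> []" "last hw = (v, d)"
    using \<open>fw \<noteq> []\<close> last_fw \<open>u \<noteq> v\<close> by (simp_all add: hw_def h_def last_map)
  moreover have "successively (\<noteq>) hw \<longleftrightarrow> alternate w u v"
    unfolding hw_def successively_map alternate_iff_successively fw_def[symmetric]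
    by (rule successively_cong) (auto simp: fw_def h_def \<open>u \<noteq> v\<close>)
  ultimately show ?thesis
    unfolding alternate_iff_successively restriction using \<open>u \<noteq> v\<close>
    by (cases c; cases d; cases "v = last w") (simp_all add: successively_append_iff h_def)
qed

lemma represents_prod_K2_word:
  assumes rep: "represents V E w"
  shows "represents (cart_prod_V V K2_V) (cart_prod_E E K2_E) (prod_K2_word w)"
proof -
  have set_w: "set w = V" and edge: "\<And>x y. x \<in> V \<Longrightarrow> y \<in> V \<Longrightarrow> x \<noteq> y \<Longrightarrow> E x y \<longleftrightarrow> alternate w x y"
    using rep by (simp_all add: represents_def)
  have "cart_prod_E E K2_E (x, c) (y, d) \<longleftrightarrow> alternate (prod_K2_word w) (x, c) (y, d)"
    if "x \<in> V" "y \<in> V" "(x, c) \<noteq> (y, d)" for x y c d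
  proof (cases "x = y")
    case True
    with that have "d = (\<not> c)" by simp
    then show ?thesis
      using True alternate_prod_K2_word_same[of x w] \<open>x \<in> V\<close> set_w
      by (cases c) (auto simp: cart_prod_E_def K2_E_def alternate_commute)
  next
    case False
    have product_edge: "cart_prod_E E K2_E (x, c) (y, d) \<longleftrightarrow> c = d \<and> alternate w x y"
      using False edge[OF that(1,2) False] by (auto simp: cart_prod_E_def)
    have "set (filter (\<lambda>z. z = x \<or> z = y) (remdups w)) = {x, y}"
      using that set_w by auto
    then have "filter (\<lambda>z. z = x \<or> z = y) (remdups w) \<in> {[x, y], [y, x]}"
      using distinct_set_doubleton[OF _ _ False] by simp
    then consider "filter (\<lambda>z. z = x \<or> z = y) (remdups w) = [x, y]"
      | "filter (\<lambda>z. z = y \<or> z = x) (remdups w) = [y, x]"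
      by (auto simp: disj_commute)
    then show ?thesis
    proof cases
      case 1
      show ?thesis using alternate_prod_K2_word_distinct[OF False 1] product_edge by simp
    next
      case 2
      show ?thesis
        using alternate_prod_K2_word_distinct[OF False[symmetric] 2, of d c] product_edge
          alternate_commute[of "prod_K2_word w" "(x, c)"] alternate_commute[of w x]
        by auto
    qed
  qed
  then show ?thesis
    unfolding represents_def cart_prod_V_def K2_V_def set_prod_K2_word set_w by auto
qed

lemma min_rep_len_le: "represents V E w \<Longrightarrow> min_rep_len V E \<le> length w"
  unfolding min_rep_len_def by (rule Least_le) blast

lemma min_rep_len_attained:
  assumes "word_representable V E"
  obtains w where "represents V E w" "length w = min_rep_len V E"
  using assms LeastI_ex[of "\<lambda>n. \<exists>w. represents V E w \<and> length w = n"]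
  unfolding word_representable_def min_rep_len_def by blast

theorem mainTheorem4:
  fixes V :: "'a set" and E :: "'a \<Rightarrow> 'a \<Rightarrow> bool"
  assumes "simple_graph V E"
    and "word_representable V E"
  shows "min_rep_len (cart_prod_V V K2_V) (cart_prod_E E K2_E)
           \<le> 2 * min_rep_len V E + 3 * card V - 2"
proof -
  obtain w where w: "represents V E w" "length w = min_rep_len V E"
    using min_rep_len_attained[OF assms(2)] .
  then have "set w = V" by (simp add: represents_def)
  have "min_rep_len (cart_prod_V V K2_V) (cart_prod_E E K2_E) \<le> length (prod_K2_word w)"
    using represents_prod_K2_word[OF w(1)] by (rule min_rep_len_le)
  also have "\<dots> = 2 * min_rep_len V E + 3 * card V - 2"
    using \<open>set w = V\<close> w(2) by (simp add: length_prod_K2_word)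
  finally show ?thesis .
qed

end
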